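(* Let $\mathcal{H}$ have dimension $D$ (finite or countably infinite), let $\hat H,\hat H'$ be self-adjoint with orthonormal eigenbases $\{|E_n\rangle\}$, $\{|E'_n\rangle\}$ and eigenvalues $\{E_n\},\{E'_n\}$ satisfying: (A) both spectra are non-degenerate; (B) if $E_k-E_l=E_m-E_n\ne0$ then $k=m$, $l=n$, and likewise for $\{E'_n\}$. Let $\hat\rho^0$ be a density operator, $\hat V$ unitary, $\hbar>0$, $\rho^0_{kl}=\langle E_k|\hat\rho^0|E_l\rangle$, $U_{mn}=\langle E'_m|\hat V|E_n\rangle$, $\rho'_{nn}(\tau)=\sum_{k,l}U_{nk}U_{nl}^*e^{-\mathrm{i}(E_k-E_l)\tau/\hbar}\rho^0_{kl}$, $\mu_n=\sum_k|U_{nk}|^2\rho^0_{kk}$, and $$\nu_{mn}=\sum_{k\neq l}U_{mk}U_{ml}^*U_{nk}^*U_{nl}|\rho^0_{kl}|^2 .$$ Then for all $m,n$, $$\overline{\rho'_{nn}(\tau)}=\mu_n,\qquad \overline{\rho'_{mm}(\tau)\rho'_{nn}(\tau)}=\mu_m\mu_n+\nu_{mn},$$ where $\overline{F(\tau)}=\lim_{T\to\infty}T^{-1}\int_0^TF(\tau)\,d\tau$. *)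

theory Defs
  imports "HOL-Analysis.Analysis"
begin

text \<open>Everything is written in coordinates: the Hilbert space of dimension D
(finite or countably infinite) is l2 over a countable index type 'i, the
eigenbasis of H is indexed by 'i, and so is the eigenbasis of H'.\<close>

definition nondegenerate :: "('i \<Rightarrow> real) \<Rightarrow> bool" where
  "nondegenerate E \<longleftrightarrow> inj E"

definition nondegenerate_gaps :: "('i \<Rightarrow> real) \<Rightarrow> bool" where
  "nondegenerate_gaps E \<longleftrightarrow>
     (\<forall>k l m n. E k - E l = E m - E n \<and> E k - E l \<noteq> 0 \<longrightarrow> k = m \<and> l = n)"

definition density_matrix :: "('i \<Rightarrow> 'i \<Rightarrow> complex) \<Rightarrow> bool" where
  "density_matrix \<rho> \<longleftrightarrow>
     (\<forall>k l. \<rho> k l = cnj (\<rho> l k)) \<and>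
     (\<forall>F x. finite F \<longrightarrow>
        Im (\<Sum>k\<in>F. \<Sum>l\<in>F. cnj (x k) * \<rho> k l * x l) = 0 \<and>
        Re (\<Sum>k\<in>F. \<Sum>l\<in>F. cnj (x k) * \<rho> k l * x l) \<ge> 0) \<and>
     ((\<lambda>k. \<rho> k k) has_sum 1) UNIV"

text \<open>Matrix of a unitary operator between two orthonormal bases:
orthonormal columns (isometry) and orthonormal rows (co-isometry).\<close>
definition unitary_matrix :: "('i \<Rightarrow> 'i \<Rightarrow> complex) \<Rightarrow> bool" where
  "unitary_matrix U \<longleftrightarrow>
     (\<forall>k l. ((\<lambda>m. cnj (U m k) * U m l) has_sum (if k = l then 1 else 0)) UNIV) \<and>
     (\<forall>m n. ((\<lambda>k. U m k * cnj (U n k)) has_sum (if m = n then 1 else 0)) UNIV)"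

definition has_time_average :: "(real \<Rightarrow> complex) \<Rightarrow> complex \<Rightarrow> bool" where
  "has_time_average F a \<longleftrightarrow>
     (\<forall>T>0. F integrable_on {0..T}) \<and>
     ((\<lambda>T. integral {0..T} F / complex_of_real T) \<longlongrightarrow> a) at_top"

definition rho_evol :: "('i \<Rightarrow> 'i \<Rightarrow> complex) \<Rightarrow> ('i \<Rightarrow> real) \<Rightarrow> real \<Rightarrow>
    ('i \<Rightarrow> 'i \<Rightarrow> complex) \<Rightarrow> 'i \<Rightarrow> real \<Rightarrow> complex" where
  "rho_evol U E hbar \<rho> n \<tau> =
     (\<Sum>\<^sub>\<infinity>(k, l)\<in>UNIV. U n k * cnj (U n l)
        * exp (- \<i> * complex_of_real ((E k - E l) * \<tau> / hbar)) * \<rho> k l)"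

definition mu :: "('i \<Rightarrow> 'i \<Rightarrow> complex) \<Rightarrow> ('i \<Rightarrow> 'i \<Rightarrow> complex) \<Rightarrow> 'i \<Rightarrow> complex" where
  "mu U \<rho> n = (\<Sum>\<^sub>\<infinity>k\<in>UNIV. complex_of_real ((cmod (U n k))\<^sup>2) * \<rho> k k)"

definition nu :: "('i \<Rightarrow> 'i \<Rightarrow> complex) \<Rightarrow> ('i \<Rightarrow> 'i \<Rightarrow> complex) \<Rightarrow> 'i \<Rightarrow> 'i \<Rightarrow> complex" where
  "nu U \<rho> m n = (\<Sum>\<^sub>\<infinity>(k, l)\<in>{(k, l). k \<noteq> l}.
      U m k * cnj (U m l) * cnj (U n k) * U n l * complex_of_real ((cmod (\<rho> k l))\<^sup>2))"

end

theory Submission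
  imports Defs
begin

text \<open>In the eigenbasis of H the population rho'_nn(tau) is an exponential sum
  sum_{k,l} c_kl exp(-i w_kl tau) over the Bohr frequencies w_kl = (E_k - E_l)/hbar, and it
  converges absolutely because |rho_kl|^2 <= rho_kk rho_ll and the rows of U are normalised.
  Approximating uniformly by finite sums shows that the time average of an absolutely convergent
  exponential sum is the sum of its zero-frequency coefficients. For rho'_nn these are the
  diagonal terms (the spectrum is non-degenerate), which give mu_n. The product
  rho'_mm rho'_nn is an exponential sum over pairs ((k,l),(k',l')) with frequencies
  w_kl + w_k'l'; by the gap condition these vanish only for k = l, k' = l', contributing
  mu_m mu_n, and for (k',l') = (l,k) with k ~= l, contributing nu_mn since rho_lk = conj rho_kl.\<close>

lemma abs_summable_tail_small:
  fixes f :: "'a \<Rightarrow> 'b::real_normed_vector"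
  assumes "(\<lambda>a. norm (f a)) summable_on UNIV" "\<epsilon> > 0"
  obtains S where "finite S" "(\<Sum>\<^sub>\<infinity>a\<in>-S. norm (f a)) < \<epsilon>"
proof -
  obtain S where S: "finite S" "dist (\<Sum>a\<in>S. norm (f a)) (\<Sum>\<^sub>\<infinity>a. norm (f a)) \<le> \<epsilon> / 2"
    using infsum_finite_approximation[OF assms(1), of "\<epsilon> / 2"] assms(2) by auto
  have "(\<Sum>\<^sub>\<infinity>a\<in>-S. norm (f a)) = (\<Sum>\<^sub>\<infinity>a. norm (f a)) - (\<Sum>a\<in>S. norm (f a))"
    unfolding Compl_eq_Diff_UNIV using assms(1) S(1) by (subst infsum_Diff) auto
  moreover have "(\<Sum>\<^sub>\<infinity>a. norm (f a)) - (\<Sum>a\<in>S. norm (f a)) \<le> \<epsilon> / 2"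
    using S(2) unfolding dist_real_def by linarith
  ultimately show ?thesis
    using S(1) assms(2) by (intro that[of S]) auto
qed

lemma norm_infsum_minus_sum_le_tail:
  fixes f :: "'a \<Rightarrow> 'b::banach"
  assumes "(\<lambda>a. norm (f a)) summable_on UNIV" "finite S"
  shows "norm ((\<Sum>\<^sub>\<infinity>a\<in>A. f a) - (\<Sum>a\<in>A \<inter> S. f a)) \<le> (\<Sum>\<^sub>\<infinity>a\<in>-S. norm (f a))"
proof -
  have abs: "(\<lambda>a. norm (f a)) summable_on B" for B
    using summable_on_subset_banach[OF assms(1)] by blast
  have "(\<Sum>\<^sub>\<infinity>a\<in>A. f a) = (\<Sum>\<^sub>\<infinity>a\<in>(A \<inter> S) \<union> (A - S). f a)"
    by (simp add: Int_Diff_Un)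
  also have "\<dots> = (\<Sum>a\<in>A \<inter> S. f a) + (\<Sum>\<^sub>\<infinity>a\<in>A - S. f a)"
    using assms(2) abs by (subst infsum_Un_disjoint) (auto intro: abs_summable_summable)
  finally have "norm ((\<Sum>\<^sub>\<infinity>a\<in>A. f a) - (\<Sum>a\<in>A \<inter> S. f a)) = norm (\<Sum>\<^sub>\<infinity>a\<in>A - S. f a)"
    by simp
  also have "\<dots> \<le> (\<Sum>\<^sub>\<infinity>a\<in>A - S. norm (f a))"
    using abs by (rule norm_infsum_bound)
  also have "\<dots> \<le> (\<Sum>\<^sub>\<infinity>a\<in>-S. norm (f a))"
    using abs by (intro infsum_mono_neutral) auto
  finally show ?thesis .
qed

lemma abs_summable_times:
  fixes f :: "'a \<Rightarrow> 'c::{real_normed_div_algebra,banach}" and g :: "'b \<Rightarrow> 'c"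
  assumes "(\<lambda>x. norm (f x)) summable_on UNIV" "(\<lambda>y. norm (g y)) summable_on UNIV"
  shows "(\<lambda>z. norm (f (fst z) * g (snd z))) summable_on UNIV"
proof -
  have "(\<lambda>x. norm (\<Sum>\<^sub>\<infinity>y. norm (f x * g y))) summable_on UNIV"
    using summable_on_cmult_left[OF assms(1), of "\<Sum>\<^sub>\<infinity>y. norm (g y)"]
    by (simp add: norm_mult infsum_cmult_right' infsum_nonneg)
  with assms(2) have "(\<lambda>z. norm (f (fst z) * g (snd z))) summable_on Sigma UNIV (\<lambda>_. UNIV)"
    by (intro Infinite_Sum.abs_summable_on_Sigma_iff[THEN iffD2]) (simp add: norm_mult summable_on_cmult_right)
  then show ?thesis
    by simp
qed

lemma infsum_times_infsum:
  fixes f :: "'a \<Rightarrow> 'c::{real_normed_div_algebra,banach}" and g :: "'b \<Rightarrow> 'c"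
  assumes "(\<lambda>x. norm (f x)) summable_on UNIV" "(\<lambda>y. norm (g y)) summable_on UNIV"
  shows "(\<Sum>\<^sub>\<infinity>x. f x) * (\<Sum>\<^sub>\<infinity>y. g y) = (\<Sum>\<^sub>\<infinity>z. f (fst z) * g (snd z))"
proof -
  have "(\<lambda>z. f (fst z) * g (snd z)) summable_on Sigma UNIV (\<lambda>_. UNIV)"
    using abs_summable_summable[OF abs_summable_times[OF assms]] by simp
  from infsum_Sigma_banach[OF this]
  have "(\<Sum>\<^sub>\<infinity>x. \<Sum>\<^sub>\<infinity>y. f x * g y) = (\<Sum>\<^sub>\<infinity>z. f (fst z) * g (snd z))"
    by simp
  moreover have "(\<Sum>\<^sub>\<infinity>x. \<Sum>\<^sub>\<infinity>y. f x * g y) = (\<Sum>\<^sub>\<infinity>x. f x) * (\<Sum>\<^sub>\<infinity>y. g y)"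
    using assms by (simp add: infsum_cmult_right infsum_cmult_left abs_summable_summable)
  ultimately show ?thesis
    by simp
qed

section \<open>Time averages of exponential sums\<close>

lemma has_integral_exp_linear:
  fixes w T :: real
  assumes "w \<noteq> 0" "0 \<le> T"
  shows "((\<lambda>t. exp (- \<i> * of_real (w * t))) has_integral
           (exp (- \<i> * of_real (w * T)) - 1) / (- \<i> * of_real w)) {0..T}"
proof -
  let ?g = "\<lambda>t. exp (- \<i> * of_real (w * t)) / (- \<i> * of_real w)"
  have "(?g has_vector_derivative exp (- \<i> * of_real (w * t))) (at t within {0..T})" for t
    using \<open>w \<noteq> 0\<close>
    by (auto intro!: derivative_eq_intros has_vector_derivative_real_field simp: field_simps)
  then have "((\<lambda>t. exp (- \<i> * of_real (w * t))) has_integral ?g T - ?g 0) {0..T}"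
    using assms(2) by (intro fundamental_theorem_of_calculus) auto
  then show ?thesis
    by (simp add: diff_divide_distrib)
qed

lemma has_time_average_exp:
  fixes w :: real
  shows "has_time_average (\<lambda>t. exp (- \<i> * of_real (w * t))) (if w = 0 then 1 else 0)"
proof -
  have "(\<lambda>t. exp (- \<i> * of_real (w * t))) integrable_on {0..T}" for T
    by (intro integrable_continuous_real continuous_intros)
  moreover have "((\<lambda>T. integral {0..T} (\<lambda>t. exp (- \<i> * of_real (w * t))) / of_real T)
                   \<longlongrightarrow> (if w = 0 then 1 else 0)) at_top"
  proof (cases "w = 0")
    case True
    have "\<forall>\<^sub>F T in at_top. integral {0..T} (\<lambda>t. exp (- \<i> * of_real (w * t))) / of_real T = 1"
      using eventually_gt_at_top[of 0] by eventually_elim (simp add: True scaleR_conv_of_real)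
    then show ?thesis
      using True by (simp add: tendsto_eventually)
  next
    case False
    have "\<forall>\<^sub>F T in at_top. norm (integral {0..T} (\<lambda>t. exp (- \<i> * of_real (w * t))) / of_real T)
            \<le> 2 / \<bar>w\<bar> * inverse T"
      using eventually_gt_at_top[of 0]
    proof eventually_elim
      case (elim T)
      have "norm (exp (- \<i> * of_real (w * T)) - 1) \<le> 2"
        using norm_triangle_ineq4[of "exp (- \<i> * of_real (w * T))" 1]
        by (simp add: norm_exp_eq_Re)
      moreover have "integral {0..T} (\<lambda>t. exp (- \<i> * of_real (w * t))) =
          (exp (- \<i> * of_real (w * T)) - 1) / (- \<i> * of_real w)"
        using has_integral_exp_linear[OF False, of T] elim by (simp add: integral_unique)
      ultimately have "norm (integral {0..T} (\<lambda>t. exp (- \<i> * of_real (w * t)))) \<le> 2 / \<bar>w\<bar>"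
        using False by (simp add: norm_divide norm_mult divide_right_mono)
      then show ?case
        using elim by (simp add: norm_divide divide_right_mono field_simps)
    qed
    moreover have "((\<lambda>T. 2 / \<bar>w\<bar> * inverse T) \<longlongrightarrow> 0) at_top"
      by (intro tendsto_mult_right_zero tendsto_inverse_0_at_top filterlim_ident)
    ultimately show ?thesis
      using False by (simp add: Lim_null_comparison)
  qed
  ultimately show ?thesis
    by (simp add: has_time_average_def)
qed

lemma has_time_average_sum:
  assumes "finite S" "\<And>a. a \<in> S \<Longrightarrow> has_time_average (F a) (c a)"
  shows "has_time_average (\<lambda>t. \<Sum>a\<in>S. F a t) (\<Sum>a\<in>S. c a)"
proof -
  have int: "F a integrable_on {0..T}" if "a \<in> S" "T > 0" for a T
    using assms(2)[OF that(1)] that(2) by (simp add: has_time_average_def)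
  have "\<forall>\<^sub>F T in at_top. (\<Sum>a\<in>S. integral {0..T} (F a) / of_real T) =
          integral {0..T} (\<lambda>t. \<Sum>a\<in>S. F a t) / of_real T"
    using eventually_gt_at_top[of 0]
    by eventually_elim (simp add: integral_sum int assms(1) sum_divide_distrib)
  moreover have "((\<lambda>T. \<Sum>a\<in>S. integral {0..T} (F a) / of_real T) \<longlongrightarrow> (\<Sum>a\<in>S. c a)) at_top"
    using assms(2) by (intro tendsto_sum) (simp add: has_time_average_def)
  ultimately show ?thesis
    using int assms(1)
    by (auto simp: has_time_average_def intro: integrable_sum Lim_transform_eventually)
qed

lemma has_time_average_cmult:
  assumes "has_time_average F a"
  shows "has_time_average (\<lambda>t. c * F t) (c * a)"
proof -
  have "((\<lambda>T. c * (integral {0..T} F / of_real T)) \<longlongrightarrow> c * a) at_top"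
    using assms by (intro tendsto_mult_left) (simp add: has_time_average_def)
  then show ?thesis
    using assms by (simp add: has_time_average_def integrable_on_mult_right)
qed

lemma has_time_average_uniform_approx:
  assumes approx: "\<And>\<epsilon>. \<epsilon> > 0 \<Longrightarrow>
      \<exists>G b. has_time_average G b \<and> (\<forall>t\<ge>0. norm (F t - G t) \<le> \<epsilon>) \<and> norm (a - b) \<le> \<epsilon>"
  shows "has_time_average F a"
proof -
  have intF: "F integrable_on {0..T}" for T
    unfolding cbox_interval[symmetric]
  proof (rule integrable_uniform_limit)
    fix \<epsilon> :: real assume "\<epsilon> > 0"
    then obtain G b where G: "has_time_average G b" "\<forall>t\<ge>0. norm (F t - G t) \<le> \<epsilon>"
      using approx by blast
    then have "G integrable_on {0..max 1 T}"
      by (simp add: has_time_average_def)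
    then have "G integrable_on {0..T}"
      by (rule integrable_on_subinterval) auto
    with G(2) show "\<exists>g. (\<forall>x\<in>cbox 0 T. norm (F x - g x) \<le> \<epsilon>) \<and> g integrable_on cbox 0 T"
      by (intro exI[of _ G]) (auto simp: cbox_interval)
  qed
  moreover have "((\<lambda>T. integral {0..T} F / of_real T) \<longlongrightarrow> a) at_top"
  proof (rule tendstoI)
    fix \<epsilon> :: real assume "\<epsilon> > 0"
    then obtain G b where G: "has_time_average G b" "\<forall>t\<ge>0. norm (F t - G t) \<le> \<epsilon> / 4"
      and ab: "norm (a - b) \<le> \<epsilon> / 4"
      using approx[of "\<epsilon> / 4"] by auto
    have "\<forall>\<^sub>F T in at_top. dist (integral {0..T} G / of_real T) b < \<epsilon> / 4"
      using G(1) \<open>\<epsilon> > 0\<close> by (intro tendstoD) (auto simp: has_time_average_def)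
    then show "\<forall>\<^sub>F T in at_top. dist (integral {0..T} F / of_real T) a < \<epsilon>"
      using eventually_gt_at_top[of 0]
    proof eventually_elim
      case (elim T)
      have "G integrable_on {0..T}"
        using G(1) elim by (simp add: has_time_average_def)
      then have "((\<lambda>t. F t - G t) has_integral integral {0..T} F - integral {0..T} G) {0..T}"
        using intF by (intro has_integral_diff) auto
      from has_integral_bound_real[OF _ finite.emptyI this, of "\<epsilon> / 4"]
      have "norm (integral {0..T} F - integral {0..T} G) \<le> \<epsilon> / 4 * T"
        using G(2) \<open>\<epsilon> > 0\<close> elim by auto
      then have "dist (integral {0..T} F / of_real T) (integral {0..T} G / of_real T) \<le> \<epsilon> / 4"
        using elim by (simp add: dist_norm diff_divide_distrib[symmetric] norm_divide field_simps)
      moreover have "dist b a \<le> \<epsilon> / 4"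
        using ab by (simp add: dist_norm norm_minus_commute)
      ultimately show ?case
        using elim(1) \<open>\<epsilon> > 0\<close> dist_triangle[of "integral {0..T} F / of_real T" a b]
          dist_triangle[of "integral {0..T} F / of_real T" b "integral {0..T} G / of_real T"]
        by linarith
    qed
  qed
  ultimately show ?thesis
    by (simp add: has_time_average_def)
qed

lemma has_time_average_exp_series:
  fixes c :: "'a \<Rightarrow> complex" and w :: "'a \<Rightarrow> real"
  assumes "(\<lambda>a. norm (c a)) summable_on UNIV"
  shows "has_time_average (\<lambda>t. \<Sum>\<^sub>\<infinity>a. c a * exp (- \<i> * of_real (w a * t)))
           (\<Sum>\<^sub>\<infinity>a\<in>{a. w a = 0}. c a)"
proof (rule has_time_average_uniform_approx)
  fix \<epsilon> :: real assume "\<epsilon> > 0"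
  with assms obtain S where S: "finite S" "(\<Sum>\<^sub>\<infinity>a\<in>-S. norm (c a)) < \<epsilon>"
    by (rule abs_summable_tail_small)
  have avg: "has_time_average (\<lambda>t. \<Sum>a\<in>S. c a * exp (- \<i> * of_real (w a * t)))
          (\<Sum>a\<in>S. c a * (if w a = 0 then 1 else 0))"
    by (intro has_time_average_sum has_time_average_cmult has_time_average_exp S(1))
  have resonant: "(\<Sum>a\<in>S. c a * (if w a = 0 then 1 else 0)) = (\<Sum>a\<in>{a. w a = 0} \<inter> S. c a)"
    using S(1) by (simp add: sum.inter_restrict if_distrib Int_commute cong: if_cong)
  have close: "norm ((\<Sum>\<^sub>\<infinity>a. c a * exp (- \<i> * of_real (w a * t)))
                  - (\<Sum>a\<in>S. c a * exp (- \<i> * of_real (w a * t)))) \<le> \<epsilon>" for t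
    using norm_infsum_minus_sum_le_tail[of "\<lambda>a. c a * exp (- \<i> * of_real (w a * t))" S UNIV]
      assms S by (simp add: norm_mult norm_exp_eq_Re)
  have limit_close: "norm ((\<Sum>\<^sub>\<infinity>a\<in>{a. w a = 0}. c a) - (\<Sum>a\<in>{a. w a = 0} \<inter> S. c a)) \<le> \<epsilon>"
    using norm_infsum_minus_sum_le_tail[OF assms S(1), of "{a. w a = 0}"] S(2) by simp
  show "\<exists>G b. has_time_average G b
      \<and> (\<forall>t\<ge>0. norm ((\<Sum>\<^sub>\<infinity>a. c a * exp (- \<i> * of_real (w a * t))) - G t) \<le> \<epsilon>)
      \<and> norm ((\<Sum>\<^sub>\<infinity>a\<in>{a. w a = 0}. c a) - b) \<le> \<epsilon>"
    using avg close limit_close unfolding resonant by (intro exI conjI allI impI)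
qed

lemma exp_series_mult:
  fixes c d :: "'a \<Rightarrow> complex" and v w :: "'a \<Rightarrow> real"
  assumes "(\<lambda>a. norm (c a)) summable_on UNIV" "(\<lambda>b. norm (d b)) summable_on UNIV"
  shows "(\<Sum>\<^sub>\<infinity>a. c a * exp (- \<i> * of_real (v a * t))) * (\<Sum>\<^sub>\<infinity>b. d b * exp (- \<i> * of_real (w b * t)))
       = (\<Sum>\<^sub>\<infinity>z. c (fst z) * d (snd z) * exp (- \<i> * of_real ((v (fst z) + w (snd z)) * t)))"
proof -
  have exp_phase_add: "exp (- \<i> * of_real (x * t)) * exp (- \<i> * of_real (y * t))
      = exp (- \<i> * of_real ((x + y) * t))" for x y :: real
    by (simp add: algebra_simps flip: exp_add)
  have "(\<Sum>\<^sub>\<infinity>a. c a * exp (- \<i> * of_real (v a * t))) * (\<Sum>\<^sub>\<infinity>b. d b * exp (- \<i> * of_real (w b * t)))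
      = (\<Sum>\<^sub>\<infinity>z. c (fst z) * exp (- \<i> * of_real (v (fst z) * t)) * (d (snd z) * exp (- \<i> * of_real (w (snd z) * t))))"
    using assms by (intro infsum_times_infsum) (simp_all add: norm_mult norm_exp_eq_Re)
  also have "\<dots> = (\<Sum>\<^sub>\<infinity>z. c (fst z) * d (snd z) * exp (- \<i> * of_real ((v (fst z) + w (snd z)) * t)))"
    by (intro infsum_cong) (subst exp_phase_add[symmetric], simp add: mult_ac)
  finally show ?thesis .
qed

lemma density_matrix_hermitian:
  assumes "density_matrix \<rho>"
  shows "\<rho> k l = cnj (\<rho> l k)"
  using assms unfolding density_matrix_def by blast

lemma density_matrix_form_nonneg:
  assumes "density_matrix \<rho>" "finite F"
  shows "0 \<le> Re (\<Sum>k\<in>F. \<Sum>l\<in>F. cnj (x k) * \<rho> k l * x l)"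
  using assms unfolding density_matrix_def by blast

lemma density_matrix_diag_real:
  assumes "density_matrix \<rho>"
  shows "\<rho> k k = of_real (Re (\<rho> k k))"
  using density_matrix_hermitian[OF assms, of k k] by (simp add: complex_eq_iff)

lemma density_matrix_diag_nonneg:
  assumes "density_matrix \<rho>"
  shows "0 \<le> Re (\<rho> k k)"
  using density_matrix_form_nonneg[OF assms, of "{k}" "\<lambda>_. 1"] by simp

lemma density_matrix_diag_summable:
  assumes "density_matrix \<rho>"
  shows "(\<lambda>k. Re (\<rho> k k)) summable_on UNIV"
proof -
  have "((\<lambda>k. \<rho> k k) has_sum 1) UNIV"
    using assms unfolding density_matrix_def by blast
  from has_sum_Re[OF this] show ?thesis
    by (auto intro: has_sum_imp_summable)
qed

lemma hermitian_2x2_psd_norm_sq_le: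
  fixes a b :: real and z :: complex
  assumes psd: "\<And>x y. 0 \<le> Re (cnj x * of_real a * x + cnj x * z * y + cnj y * cnj z * x + cnj y * of_real b * y)"
  shows "(cmod z)\<^sup>2 \<le> a * b"
proof (cases "b = 0")
  case True
  have "0 \<le> a"
    using psd[of 1 0] by simp
  have "0 \<le> Re (cnj (- z) * of_real a * (- z) + cnj (- z) * z * of_real (a + 1)
              + of_real (a + 1) * cnj z * (- z))"
    using psd[of "- z" "of_real (a + 1)"] True by simp
  also have "\<dots> = - ((a + 2) * (cmod z)\<^sup>2)"
    unfolding cmod_power2 by (simp add: algebra_simps power2_eq_square)
  finally have "(a + 2) * (cmod z)\<^sup>2 \<le> 0"
    by (simp only: neg_0_le_iff_le)
  then show ?thesis
    using \<open>0 \<le> a\<close> True by (simp add: mult_le_0_iff)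
next
  case False
  have "0 \<le> b"
    using psd[of 0 1] by simp
  have "0 \<le> Re (of_real b * of_real a * of_real b + of_real b * z * (- cnj z)
              + (- z) * cnj z * of_real b + (- z) * of_real b * (- cnj z))"
    using psd[of "of_real b" "- cnj z"] by simp
  also have "\<dots> = b * (a * b - (cmod z)\<^sup>2)"
    unfolding cmod_power2 by (simp add: algebra_simps power2_eq_square)
  finally show ?thesis
    using \<open>0 \<le> b\<close> False by (simp add: zero_le_mult_iff)
qed

lemma density_matrix_norm_le:
  assumes "density_matrix \<rho>"
  shows "cmod (\<rho> k l) \<le> sqrt (Re (\<rho> k k)) * sqrt (Re (\<rho> l l))"
proof (cases "k = l")
  case True
  have "cmod (\<rho> l l) = Re (\<rho> l l)"
    using density_matrix_diag_real[OF assms, of l] density_matrix_diag_nonneg[OF assms, of l]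
    by (metis norm_of_real abs_of_nonneg)
  then show ?thesis
    using True density_matrix_diag_nonneg[OF assms, of l] by simp
next
  case False
  have "(cmod (\<rho> k l))\<^sup>2 \<le> Re (\<rho> k k) * Re (\<rho> l l)"
  proof (rule hermitian_2x2_psd_norm_sq_le)
    fix x y :: complex
    have "(\<Sum>i\<in>{k, l}. \<Sum>j\<in>{k, l}. cnj (if i = k then x else y) * \<rho> i j * (if j = k then x else y))
        = cnj x * \<rho> k k * x + cnj x * \<rho> k l * y + cnj y * \<rho> l k * x + cnj y * \<rho> l l * y"
      using False by (simp add: add.assoc)
    with density_matrix_form_nonneg[OF assms, of "{k, l}" "\<lambda>i. if i = k then x else y"]
    have "0 \<le> Re (cnj x * \<rho> k k * x + cnj x * \<rho> k l * y + cnj y * \<rho> l k * x + cnj y * \<rho> l l * y)"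
      by simp
    then show "0 \<le> Re (cnj x * of_real (Re (\<rho> k k)) * x + cnj x * \<rho> k l * y
                 + cnj y * cnj (\<rho> k l) * x + cnj y * of_real (Re (\<rho> l l)) * y)"
      by (simp only: density_matrix_diag_real[OF assms, symmetric]
            density_matrix_hermitian[OF assms, of l k, symmetric])
  qed
  from real_le_rsqrt[OF this] show ?thesis
    by (simp add: real_sqrt_mult)
qed

lemma unitary_matrix_row_summable:
  assumes "unitary_matrix U"
  shows "(\<lambda>k. (cmod (U n k))\<^sup>2) summable_on UNIV"
proof -
  have "((\<lambda>k. U n k * cnj (U n k)) has_sum 1) UNIV"
    using assms[unfolded unitary_matrix_def, THEN conjunct2, rule_format, of n n] by simp
  from has_sum_Re[OF this] have "((\<lambda>k. (cmod (U n k))\<^sup>2) has_sum 1) UNIV"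
    by (simp add: complex_mult_cnj cmod_power2)
  then show ?thesis
    by (rule has_sum_imp_summable)
qed

section \<open>Fourier expansion of the evolved populations\<close>

definition rho_evol_coeff :: "('i \<Rightarrow> 'i \<Rightarrow> complex) \<Rightarrow> ('i \<Rightarrow> 'i \<Rightarrow> complex) \<Rightarrow> 'i \<Rightarrow> 'i \<times> 'i \<Rightarrow> complex"
  where "rho_evol_coeff U \<rho> n kl = U n (fst kl) * cnj (U n (snd kl)) * \<rho> (fst kl) (snd kl)"

definition bohr_freq :: "('i \<Rightarrow> real) \<Rightarrow> real \<Rightarrow> 'i \<times> 'i \<Rightarrow> real"
  where "bohr_freq E hbar kl = (E (fst kl) - E (snd kl)) / hbar"

lemma rho_evol_eq_exp_series:
  "rho_evol U E hbar \<rho> n =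
     (\<lambda>t. \<Sum>\<^sub>\<infinity>kl. rho_evol_coeff U \<rho> n kl * exp (- \<i> * of_real (bohr_freq E hbar kl * t)))"
  unfolding rho_evol_def rho_evol_coeff_def bohr_freq_def
  by (intro ext infsum_cong) (auto split: prod.splits)

lemma rho_evol_coeff_abs_summable:
  assumes "density_matrix \<rho>" "unitary_matrix U"
  shows "(\<lambda>kl. norm (rho_evol_coeff U \<rho> n kl)) summable_on UNIV"
proof -
  define \<phi> where "\<phi> k = cmod (U n k) * sqrt (Re (\<rho> k k))" for k
  have \<phi>_nonneg: "0 \<le> \<phi> k" for k
    using density_matrix_diag_nonneg[OF assms(1), of k] by (simp add: \<phi>_def)
  have "2 * \<phi> k \<le> (cmod (U n k))\<^sup>2 + Re (\<rho> k k)" for k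
    using sum_squares_bound[of "cmod (U n k)" "sqrt (Re (\<rho> k k))"]
      density_matrix_diag_nonneg[OF assms(1), of k]
    by (simp add: \<phi>_def mult.assoc)
  with \<phi>_nonneg have bound: "\<phi> k \<le> (cmod (U n k))\<^sup>2 + Re (\<rho> k k)" for k
    by (smt (verit))
  have "\<phi> summable_on UNIV"
    using unitary_matrix_row_summable[OF assms(2), of n] density_matrix_diag_summable[OF assms(1)]
    by (rule summable_on_comparison_test[OF summable_on_add]) (simp_all add: bound \<phi>_nonneg)
  then have \<phi>_abs: "(\<lambda>k. norm (\<phi> k)) summable_on UNIV"
    using \<phi>_nonneg by simp
  have \<phi>_prod_abs: "(\<lambda>kl. norm (\<phi> (fst kl) * \<phi> (snd kl))) summable_on UNIV"
    using \<phi>_abs \<phi>_abs by (rule abs_summable_times)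
  have coeff_bound: "norm (rho_evol_coeff U \<rho> n (k, l)) \<le> norm (\<phi> k * \<phi> l)" for k l
  proof -
    have "norm (rho_evol_coeff U \<rho> n (k, l)) = cmod (U n k) * cmod (U n l) * cmod (\<rho> k l)"
      by (simp add: rho_evol_coeff_def norm_mult)
    also have "\<dots> \<le> cmod (U n k) * cmod (U n l) * (sqrt (Re (\<rho> k k)) * sqrt (Re (\<rho> l l)))"
      using density_matrix_norm_le[OF assms(1)] by (intro mult_left_mono) simp_all
    also have "\<dots> = \<phi> k * \<phi> l"
      by (simp add: \<phi>_def mult_ac)
    also have "\<dots> = norm (\<phi> k * \<phi> l)"
      using \<phi>_nonneg[of k] \<phi>_nonneg[of l] by simp
    finally show ?thesis .
  qed
  show ?thesis
    using coeff_bound[of "fst kl" "snd kl" for kl]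
    by (intro Infinite_Sum.abs_summable_on_comparison_test[OF \<phi>_prod_abs]) simp
qed

lemma bohr_freq_eq_0_iff:
  assumes "nondegenerate E" "hbar \<noteq> 0"
  shows "bohr_freq E hbar kl = 0 \<longleftrightarrow> fst kl = snd kl"
  using assms by (auto simp: bohr_freq_def nondegenerate_def inj_eq)

lemma bohr_freq_add_eq_0_iff:
  assumes "nondegenerate E" "nondegenerate_gaps E" "hbar \<noteq> 0"
  shows "bohr_freq E hbar (k, l) + bohr_freq E hbar (k', l') = 0 \<longleftrightarrow>
           k = l \<and> k' = l' \<or> k \<noteq> l \<and> k' = l \<and> l' = k"
proof -
  have injE: "E i = E j \<longleftrightarrow> i = j" for i j
    using assms(1) by (auto simp: nondegenerate_def inj_eq)
  have "bohr_freq E hbar (k, l) + bohr_freq E hbar (k', l') = 0 \<longleftrightarrow> E k - E l = E l' - E k'"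
    using assms(3) by (auto simp: bohr_freq_def add_divide_distrib[symmetric])
  also have "\<dots> \<longleftrightarrow> k = l \<and> k' = l' \<or> k \<noteq> l \<and> k' = l \<and> l' = k"
  proof
    assume gap: "E k - E l = E l' - E k'"
    show "k = l \<and> k' = l' \<or> k \<noteq> l \<and> k' = l \<and> l' = k"
    proof (cases "k = l")
      case True
      then show ?thesis
        using gap injE[of l' k'] by simp
    next
      case False
      then have "E k - E l \<noteq> 0"
        using injE[of k l] by simp
      with gap assms(2) have "k = l' \<and> l = k'"
        unfolding nondegenerate_gaps_def by blast
      with False show ?thesis
        by simp
    qed
  qed auto
  finally show ?thesis .
qed

lemma infsum_rho_evol_coeff_diag:
  "(\<Sum>\<^sub>\<infinity>k. rho_evol_coeff U \<rho> n (k, k)) = mu U \<rho> n"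
  unfolding mu_def rho_evol_coeff_def
  by (intro infsum_cong) (simp add: complex_mult_cnj cmod_power2 mult.assoc)

lemma infsum_resonant_rho_evol_coeff:
  assumes "nondegenerate E" "hbar \<noteq> 0"
  shows "(\<Sum>\<^sub>\<infinity>kl\<in>{kl. bohr_freq E hbar kl = 0}. rho_evol_coeff U \<rho> n kl) = mu U \<rho> n"
proof -
  have "{kl. bohr_freq E hbar kl = 0} = range (\<lambda>k. (k, k))"
    using bohr_freq_eq_0_iff[OF assms] by (auto simp: prod_eq_iff)
  then show ?thesis
    by (simp add: infsum_reindex inj_on_def o_def infsum_rho_evol_coeff_diag)
qed

lemma infsum_rho_evol_coeff_diag_mult:
  assumes "density_matrix \<rho>" "unitary_matrix U"
  shows "(\<Sum>\<^sub>\<infinity>z. rho_evol_coeff U \<rho> m (fst z, fst z) * rho_evol_coeff U \<rho> n (snd z, snd z))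
         = mu U \<rho> m * mu U \<rho> n"
proof -
  have diag_abs: "(\<lambda>k. norm (rho_evol_coeff U \<rho> j (k, k))) summable_on UNIV" for j
    using summable_on_subset_banach[OF rho_evol_coeff_abs_summable[OF assms], of "range (\<lambda>k. (k, k))"]
    by (subst (asm) summable_on_reindex) (auto simp: inj_on_def o_def)
  show ?thesis
    using infsum_times_infsum[OF diag_abs diag_abs] by (simp add: infsum_rho_evol_coeff_diag)
qed

lemma rho_evol_coeff_mult_swap:
  assumes "density_matrix \<rho>"
  shows "rho_evol_coeff U \<rho> m (k, l) * rho_evol_coeff U \<rho> n (l, k)
         = U m k * cnj (U m l) * cnj (U n k) * U n l * of_real ((cmod (\<rho> k l))\<^sup>2)"
  using density_matrix_hermitian[OF assms, of l k]
  by (simp add: rho_evol_coeff_def complex_mult_cnj cmod_power2 mult_ac)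

lemma infsum_resonant_rho_evol_coeff_pairs:
  assumes "nondegenerate E" "nondegenerate_gaps E" "hbar \<noteq> 0"
    and "density_matrix \<rho>" "unitary_matrix U"
  shows "(\<Sum>\<^sub>\<infinity>z\<in>{z. bohr_freq E hbar (fst z) + bohr_freq E hbar (snd z) = 0}.
            rho_evol_coeff U \<rho> m (fst z) * rho_evol_coeff U \<rho> n (snd z))
         = mu U \<rho> m * mu U \<rho> n + nu U \<rho> m n"
proof -
  define C where "C z = rho_evol_coeff U \<rho> m (fst z) * rho_evol_coeff U \<rho> n (snd z)" for z
  define diag where "diag kl = ((fst kl, fst kl), (snd kl, snd kl))" for kl :: "'a \<times> 'a"
  define swap where "swap kl = (kl, (snd kl, fst kl))" for kl :: "'a \<times> 'a"
  have coeff: "(\<lambda>kl. norm (rho_evol_coeff U \<rho> j kl)) summable_on UNIV" for j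
    using assms(4,5) by (rule rho_evol_coeff_abs_summable)
  have C: "C summable_on A" for A
    using abs_summable_times[OF coeff coeff] unfolding C_def
    by (rule summable_on_subset_banach[OF abs_summable_summable]) auto
  have resonant: "{z. bohr_freq E hbar (fst z) + bohr_freq E hbar (snd z) = 0}
      = range diag \<union> swap ` {(k, l). k \<noteq> l}"
    using bohr_freq_add_eq_0_iff[OF assms(1-3)]
    by (auto simp: diag_def swap_def image_def prod_eq_iff)
  have "infsum C (range diag) = infsum (C \<circ> diag) UNIV"
    by (rule infsum_reindex) (auto simp: inj_on_def diag_def prod_eq_iff)
  also have "\<dots> = mu U \<rho> m * mu U \<rho> n"
    using infsum_rho_evol_coeff_diag_mult[OF assms(4,5)] by (simp add: C_def diag_def o_def)
  finally have diag_part: "infsum C (range diag) = mu U \<rho> m * mu U \<rho> n" .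
  have "infsum C (swap ` {(k, l). k \<noteq> l}) = infsum (C \<circ> swap) {(k, l). k \<noteq> l}"
    by (rule infsum_reindex) (auto simp: inj_on_def swap_def)
  also have "\<dots> = nu U \<rho> m n"
    unfolding nu_def
    by (intro infsum_cong) (auto simp: C_def swap_def rho_evol_coeff_mult_swap[OF assms(4)])
  finally have swap_part: "infsum C (swap ` {(k, l). k \<noteq> l}) = nu U \<rho> m n" .
  have "range diag \<inter> swap ` {(k, l). k \<noteq> l} = {}"
    by (auto simp: diag_def swap_def)
  then show ?thesis
    unfolding C_def[symmetric] resonant by (simp add: infsum_Un_disjoint C diag_part swap_part)
qed

theorem lemma1:
  fixes E E' :: "'i::countable \<Rightarrow> real"
    and \<rho>0 U :: "'i \<Rightarrow> 'i \<Rightarrow> complex"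
    and hbar :: real
  assumes "nondegenerate E" and "nondegenerate E'"
    and "nondegenerate_gaps E" and "nondegenerate_gaps E'"
    and "density_matrix \<rho>0"
    and "unitary_matrix U"
    and "hbar > 0"
  shows "\<forall>m n. has_time_average (rho_evol U E hbar \<rho>0 n) (mu U \<rho>0 n) \<and>
           has_time_average (\<lambda>\<tau>. rho_evol U E hbar \<rho>0 m \<tau> * rho_evol U E hbar \<rho>0 n \<tau>)
             (mu U \<rho>0 m * mu U \<rho>0 n + nu U \<rho>0 m n)"
proof (intro allI conjI)
  fix m n :: 'i
  have hbar: "hbar \<noteq> 0"
    using assms(7) by simp
  have coeff: "(\<lambda>kl. norm (rho_evol_coeff U \<rho>0 j kl)) summable_on UNIV" for j
    using assms(5,6) by (rule rho_evol_coeff_abs_summable)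
  show "has_time_average (rho_evol U E hbar \<rho>0 n) (mu U \<rho>0 n)"
    using has_time_average_exp_series[OF coeff, of n "bohr_freq E hbar"]
    by (simp add: rho_evol_eq_exp_series infsum_resonant_rho_evol_coeff[OF assms(1) hbar])
  have "(\<lambda>\<tau>. rho_evol U E hbar \<rho>0 m \<tau> * rho_evol U E hbar \<rho>0 n \<tau>) =
      (\<lambda>t. \<Sum>\<^sub>\<infinity>z. rho_evol_coeff U \<rho>0 m (fst z) * rho_evol_coeff U \<rho>0 n (snd z)
        * exp (- \<i> * of_real ((bohr_freq E hbar (fst z) + bohr_freq E hbar (snd z)) * t)))"
    unfolding rho_evol_eq_exp_series by (intro ext exp_series_mult[OF coeff coeff])
  then show "has_time_average (\<lambda>\<tau>. rho_evol U E hbar \<rho>0 m \<tau> * rho_evol U E hbar \<rho>0 n \<tau>)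
      (mu U \<rho>0 m * mu U \<rho>0 n + nu U \<rho>0 m n)"
    using has_time_average_exp_series[OF abs_summable_times[OF coeff[of m] coeff[of n]],
        of "\<lambda>z. bohr_freq E hbar (fst z) + bohr_freq E hbar (snd z)"]
    by (simp add: infsum_resonant_rho_evol_coeff_pairs[OF assms(1,3) hbar assms(5,6)])
qed

end
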